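(* Let $\Phi:[a,b]\to\mathbb{C}$ be continuous and nowhere zero, and let $X^{(n)}$, $\widetilde X^{(n)}$ ($n\ge 0$) be the $\Phi$-power functions defined below. Then for all $x_0,x\in[a,b]$: $$\widetilde X^{(n)}(x_0,x)=X^{(n)}(x,x_0)\quad\text{for } n \text{ even},$$ and $$\widetilde X^{(n)}(x_0,x)=-\widetilde X^{(n)}(x,x_0),\qquad X^{(n)}(x_0,x)=-X^{(n)}(x,x_0)\quad\text{for } n \text{ odd}.$$
   Context: For $x_0,x\in[a,b]$ the $\Phi$-power functions are defined recursively by $X^{(0)}(x_0,x)\equiv 1$, $\widetilde X^{(0)}(x_0,x)\equiv 1$ and, for $n\ge 1$, $$X^{(n)}(x_0,x)=n\int_{x_0}^x X^{(n-1)}(x_0,\xi)\,\big(\Phi(\xi)\big)^{(-1)^n}\,d\xi,\qquad \widetilde X^{(n)}(x_0,x)=n\int_{x_0}^x \widetilde X^{(n-1)}(x_0,\xi)\,\Big(\frac{1}{\Phi(\xi)}\Big)^{(-1)^n}\,d\xi.$$ *)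

theory Defs
  imports "HOL-Analysis.Analysis"
begin

definition oint :: "(real \<Rightarrow> complex) \<Rightarrow> real \<Rightarrow> real \<Rightarrow> complex" where
  "oint f x0 x = (if x0 \<le> x then integral {x0..x} f else - integral {x..x0} f)"

text \<open>Phi-power functions X^(n)(x0,x): the factor Phi^((-1)^n) is Phi for n even, 1/Phi for n odd.\<close>
fun Xpow :: "(real \<Rightarrow> complex) \<Rightarrow> nat \<Rightarrow> real \<Rightarrow> real \<Rightarrow> complex" where
  "Xpow Phi 0 x0 x = 1"
| "Xpow Phi (Suc n) x0 x =
     of_nat (Suc n) * oint (\<lambda>\<xi>. Xpow Phi n x0 \<xi> *
        (if even (Suc n) then Phi \<xi> else 1 / Phi \<xi>)) x0 x"

definition Xtilde :: "(real \<Rightarrow> complex) \<Rightarrow> nat \<Rightarrow> real \<Rightarrow> real \<Rightarrow> complex" where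
  "Xtilde Phi n = Xpow (\<lambda>\<xi>. 1 / Phi \<xi>) n"

end

theory Submission
  imports Defs
begin

text \<open>Up to the factor n!, both power functions are n-fold iterated oriented integrals whose
  kernels alternate between \<open>1/\<Phi>\<close> and \<open>\<Phi>\<close>. Swapping the limits of an n-fold iterated
  integral reverses the order of its kernels and multiplies it by \<open>(-1)\<^sup>n\<close>. A reversed
  alternating sequence is again alternating; it starts with the same kernel as the original
  when n is odd and with the other one when n is even, which is exactly the claim. The
  reversal is proved by induction after peeling off the outermost integral on the left
  instead of on the right; that step follows from Chen's identity for splitting the interval
  of integration together with uniqueness of antiderivatives.\<close>

lemma oint_eq_integral_diff:
  fixes f :: "real \<Rightarrow> complex"
  assumes f: "continuous_on {a..b} f" and s: "s \<in> {a..b}" and t: "t \<in> {a..b}"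
  shows "oint f s t = integral {a..t} f - integral {a..s} f"
proof -
  have "integral {a..min s t} f + integral {min s t..max s t} f = integral {a..max s t} f"
    using s t
    by (intro Henstock_Kurzweil_Integration.integral_combine)
      (auto intro!: integrable_continuous_interval continuous_on_subset[OF f])
  then show ?thesis
    unfolding oint_def by (cases "s \<le> t") (auto simp: algebra_simps min_def max_def)
qed

lemma has_vector_derivative_oint:
  fixes f :: "real \<Rightarrow> complex"
  assumes f: "continuous_on {a..b} f" and s: "s \<in> {a..b}" and t: "t \<in> {a..b}"
  shows "((\<lambda>u. oint f s u) has_vector_derivative f t) (at t within {a..b})"
proof -
  have "((\<lambda>u. integral {a..u} f - integral {a..s} f) has_vector_derivative f t) (at t within {a..b})"
    using integral_has_vector_derivative[OF f t] by (simp add: has_vector_derivative_diff_const)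
  then show ?thesis
    by (rule has_vector_derivative_transform[rotated 2]) (use t oint_eq_integral_diff[OF f s] in auto)
qed

lemma continuous_on_oint:
  fixes f :: "real \<Rightarrow> complex"
  assumes "continuous_on {a..b} f" and "s \<in> {a..b}"
  shows "continuous_on {a..b} (\<lambda>t. oint f s t)"
  using continuous_on_vector_derivative has_vector_derivative_oint[OF assms] .

lemma oint_self [simp]: "oint f s s = 0"
  by (simp add: oint_def)

lemma oint_swap:
  fixes f :: "real \<Rightarrow> complex"
  assumes "continuous_on {a..b} f" and "s \<in> {a..b}" "t \<in> {a..b}"
  shows "oint f t s = - oint f s t"
  using assms by (simp add: oint_eq_integral_diff)

lemma oint_combine:
  fixes f :: "real \<Rightarrow> complex"
  assumes "continuous_on {a..b} f" and "s \<in> {a..b}" "c \<in> {a..b}" "t \<in> {a..b}"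
  shows "oint f s c + oint f c t = oint f s t"
  using assms by (simp add: oint_eq_integral_diff)

lemma oint_cong:
  assumes "\<And>x. x \<in> {a..b} \<Longrightarrow> f x = g x" and "s \<in> {a..b}" "t \<in> {a..b}"
  shows "oint f s t = oint g s t"
  unfolding oint_def using assms by (auto intro!: integral_cong)

lemma oint_mult_right: "oint (\<lambda>x. c * f x) s t = c * oint f s t"
  by (simp add: oint_def)

lemma oint_sum:
  fixes f :: "'i \<Rightarrow> real \<Rightarrow> complex"
  assumes f: "\<And>i. i \<in> I \<Longrightarrow> continuous_on {a..b} (f i)"
    and s: "s \<in> {a..b}" and t: "t \<in> {a..b}"
  shows "oint (\<lambda>x. \<Sum>i\<in>I. f i x) s t = (\<Sum>i\<in>I. oint (f i) s t)"
proof (cases "finite I")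
  case True
  have "f i integrable_on {a..u}" if "u \<in> {a..b}" "i \<in> I" for u i
    using that by (intro integrable_continuous_interval continuous_on_subset[OF f]) auto
  moreover have "oint (f i) s t = integral {a..t} (f i) - integral {a..s} (f i)" if "i \<in> I" for i
    using oint_eq_integral_diff[OF f[OF that] s t] .
  moreover have "continuous_on {a..b} (\<lambda>x. \<Sum>i\<in>I. f i x)"
    by (intro continuous_intros f)
  ultimately show ?thesis
    using s t by (simp add: oint_eq_integral_diff integral_sum[OF True] sum_subtractf)
qed (simp add: oint_def)

lemma eq_if_same_vector_derivative_on_interval:
  fixes f g :: "real \<Rightarrow> 'a::real_normed_vector"
  assumes f: "\<And>u. u \<in> {a..b} \<Longrightarrow> (f has_vector_derivative D u) (at u within {a..b})"
    and g: "\<And>u. u \<in> {a..b} \<Longrightarrow> (g has_vector_derivative D u) (at u within {a..b})"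
    and "s \<in> {a..b}" "t \<in> {a..b}" and "f s = g s"
  shows "f t = g t"
proof -
  obtain c where "\<And>u. u \<in> {a..b} \<Longrightarrow> f u - g u = c"
    using has_vector_derivative_zero_constant[of "{a..b}" "\<lambda>u. f u - g u"]
      has_vector_derivative_diff[OF f g] by fastforce
  then show ?thesis
    using assms(3-) by (metis eq_iff_diff_eq_0)
qed

text \<open>\<open>iter_oint h e n s t\<close> is the iterated integral of
  \<open>h\<^sub>e(r\<^sub>1) h\<^sub>e\<^sub>+\<^sub>1(r\<^sub>2) \<dots> h\<^sub>e\<^sub>+\<^sub>n\<^sub>-\<^sub>1(r\<^sub>n)\<close> over \<open>s < r\<^sub>1 < \<dots> < r\<^sub>n < t\<close>.\<close>

fun iter_oint :: "(nat \<Rightarrow> real \<Rightarrow> complex) \<Rightarrow> nat \<Rightarrow> nat \<Rightarrow> real \<Rightarrow> real \<Rightarrow> complex" where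
  "iter_oint h e 0 s t = 1"
| "iter_oint h e (Suc n) s t = oint (\<lambda>r. h (e + n) r * iter_oint h e n s r) s t"

lemma iter_oint_self: "0 < n \<Longrightarrow> iter_oint h e n s s = 0"
  by (cases n) auto

lemma iter_oint_Suc_kernels: "iter_oint (\<lambda>k. h (Suc k)) e n s t = iter_oint h (Suc e) n s t"
  by (induction n arbitrary: t) simp_all

lemma periodic_2_eq_mod_2:
  assumes "\<And>k. h (Suc (Suc k)) = h k"
  shows "h k = h (k mod 2)"
proof -
  have "h (j + 2 * m) = h j" for j m
    by (induction m) (simp_all add: assms)
  from this[of "k mod 2" "k div 2"] show ?thesis
    by (simp add: mod_mult_div_eq)
qed

lemma iter_oint_offset_mod_2:
  assumes "\<And>k. h (Suc (Suc k)) = h k"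
  shows "iter_oint h e n s t = iter_oint h (e mod 2) n s t"
proof (induction n arbitrary: t)
  case (Suc n)
  have "h (e + n) = h (e mod 2 + n)"
    using periodic_2_eq_mod_2[of h, OF assms] by (metis mod_add_left_eq)
  with Suc show ?case by simp
qed simp

context
  fixes a b :: real and h :: "nat \<Rightarrow> real \<Rightarrow> complex"
  assumes continuous_h: "\<And>k. continuous_on {a..b} (h k)"
begin

lemma continuous_on_iter_oint:
  "s \<in> {a..b} \<Longrightarrow> continuous_on {a..b} (\<lambda>t. iter_oint h e n s t)"
proof (induction n)
  case (Suc n)
  then show ?case
    by (simp add: continuous_on_oint continuous_on_mult continuous_h)
qed simp

lemma has_vector_derivative_iter_oint:
  assumes "s \<in> {a..b}" "u \<in> {a..b}"
  shows "((\<lambda>t. iter_oint h e (Suc n) s t) has_vector_derivative h (e + n) u * iter_oint h e n s u)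
    (at u within {a..b})"
  using has_vector_derivative_oint[OF continuous_on_mult[OF continuous_h continuous_on_iter_oint] assms]
    assms(1) by simp

lemma iter_oint_split:
  assumes s: "s \<in> {a..b}" and c: "c \<in> {a..b}"
  shows "t \<in> {a..b} \<Longrightarrow>
    iter_oint h e n s t = (\<Sum>k\<le>n. iter_oint h e k s c * iter_oint h (e + k) (n - k) c t)"
proof (induction n arbitrary: t)
  case (Suc n)
  have continuous_tail: "continuous_on {a..b}
      (\<lambda>r. iter_oint h e k s c * (h (e + n) r * iter_oint h (e + k) (n - k) c r))" for k
    by (intro continuous_intros continuous_h continuous_on_iter_oint c)
  have "(\<Sum>k\<le>n. iter_oint h e k s c * iter_oint h (e + k) (Suc n - k) c t)
      = (\<Sum>k\<le>n. oint (\<lambda>r. iter_oint h e k s c * (h (e + n) r * iter_oint h (e + k) (n - k) c r)) c t)"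
    by (intro sum.cong) (auto simp: Suc_diff_le oint_mult_right)
  also have "\<dots> = oint (\<lambda>r. \<Sum>k\<le>n. iter_oint h e k s c * (h (e + n) r * iter_oint h (e + k) (n - k) c r)) c t"
    using c Suc.prems continuous_tail by (intro oint_sum[symmetric]) auto
  also have "\<dots> = oint (\<lambda>r. h (e + n) r * iter_oint h e n s r) c t"
    using c Suc.prems by (intro oint_cong) (auto simp: Suc.IH sum_distrib_left algebra_simps)
  finally show ?case
    using oint_combine[OF continuous_on_mult[OF continuous_h continuous_on_iter_oint[OF s]] s c Suc.prems]
    by (simp add: add.commute)
qed simp

lemma continuous_on_iter_oint_lower:
  "t \<in> {a..b} \<Longrightarrow> continuous_on {a..b} (\<lambda>s. iter_oint h e n s t)"
proof (induction n arbitrary: e rule: less_induct)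
  case (less n)
  \<comment> \<open>Chen's identity on the degenerate interval from s to s via t expresses the integral in
    terms of lower-order ones, which are continuous in s by induction.\<close>
  have "iter_oint h e n s t = - (\<Sum>k<n. iter_oint h e k s t * iter_oint h (e + k) (n - k) t s)"
    if s: "s \<in> {a..b}" and "0 < n" for s
  proof -
    have "0 = (\<Sum>k\<le>n. iter_oint h e k s t * iter_oint h (e + k) (n - k) t s)"
      using iter_oint_split[OF s less.prems s, of e n] iter_oint_self[OF \<open>0 < n\<close>, of h e s] by simp
    then show ?thesis
      by (simp add: lessThan_Suc_atMost[symmetric] eq_neg_iff_add_eq_0 add.commute)
  qed
  moreover have "continuous_on {a..b} (\<lambda>s. - (\<Sum>k<n. iter_oint h e k s t * iter_oint h (e + k) (n - k) t s))"
    by (intro continuous_intros less.IH less.prems continuous_on_iter_oint) auto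
  ultimately show ?case
    by (cases "n = 0") (auto intro: continuous_on_eq)
qed

lemma oint_head_iter_oint_expand:
  assumes s: "s \<in> {a..b}" and u: "u \<in> {a..b}"
  shows "oint (\<lambda>r. h e r * iter_oint h (Suc e) n r u) s u
    = (\<Sum>k\<le>n. iter_oint h (Suc e + k) (n - k) s u * oint (\<lambda>r. h e r * iter_oint h (Suc e) k r s) s u)"
proof -
  have continuous_head: "continuous_on {a..b} (\<lambda>r. c * (h e r * iter_oint h (Suc e) k r s))" for c k
    by (intro continuous_intros continuous_h continuous_on_iter_oint_lower s)
  have "oint (\<lambda>r. h e r * iter_oint h (Suc e) n r u) s u
      = oint (\<lambda>r. \<Sum>k\<le>n. iter_oint h (Suc e + k) (n - k) s u * (h e r * iter_oint h (Suc e) k r s)) s u"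
  proof (rule oint_cong[OF _ s u])
    fix r assume "r \<in> {a..b}"
    then show "h e r * iter_oint h (Suc e) n r u
      = (\<Sum>k\<le>n. iter_oint h (Suc e + k) (n - k) s u * (h e r * iter_oint h (Suc e) k r s))"
      by (simp only: iter_oint_split[OF _ s u] sum_distrib_left mult_ac)
  qed
  also have "\<dots> = (\<Sum>k\<le>n. iter_oint h (Suc e + k) (n - k) s u * oint (\<lambda>r. h e r * iter_oint h (Suc e) k r s) s u)"
    by (subst oint_sum[OF _ s u]) (auto simp: continuous_head oint_mult_right)
  finally show ?thesis .
qed

lemma has_vector_derivative_oint_head:
  assumes s: "s \<in> {a..b}" and u: "u \<in> {a..b}"
  shows "((\<lambda>t. oint (\<lambda>r. h e r * iter_oint h (Suc e) (Suc m) r t) s t) has_vector_derivative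
      h (e + Suc m) u * oint (\<lambda>r. h e r * iter_oint h (Suc e) m r u) s u) (at u within {a..b})"
proof -
  \<comment> \<open>Chen's identity at s separates the two occurrences of t; in the derivative of the
    resulting expansion the terms from the inner integrals recombine by Chen's identity into
    an integral over the degenerate interval from u to u, hence vanish.\<close>
  define \<gamma> where "\<gamma> k t = oint (\<lambda>r. h e r * iter_oint h (Suc e) k r s) s t" for k t
  define \<beta> where "\<beta> k t = iter_oint h (Suc e + k) (Suc (m - k)) s t" for k t
  have \<gamma>: "(\<gamma> k has_vector_derivative h e u * iter_oint h (Suc e) k u s) (at u within {a..b})" for k
    unfolding \<gamma>_def
    using has_vector_derivative_oint[OF continuous_on_mult[OF continuous_h continuous_on_iter_oint_lower[OF s]] s u] .
  have \<beta>: "(\<beta> k has_vector_derivative h (e + Suc m) u * iter_oint h (Suc e + k) (m - k) s u) (at u within {a..b})"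
    if "k \<in> {..m}" for k
    using has_vector_derivative_iter_oint[OF s u, of "Suc e + k" "m - k"] that
    unfolding \<beta>_def[abs_def] by (simp del: iter_oint.simps(2))
  have expand: "oint (\<lambda>r. h e r * iter_oint h (Suc e) n r t) s t
      = (\<Sum>k\<le>n. iter_oint h (Suc e + k) (n - k) s t * \<gamma> k t)" if "t \<in> {a..b}" for n t
    unfolding \<gamma>_def by (rule oint_head_iter_oint_expand[OF s that])
  have derivative: "((\<lambda>t. (\<Sum>k\<le>m. \<beta> k t * \<gamma> k t) + \<gamma> (Suc m) t) has_vector_derivative
      (\<Sum>k\<le>m. \<beta> k u * (h e u * iter_oint h (Suc e) k u s)
        + h (e + Suc m) u * iter_oint h (Suc e + k) (m - k) s u * \<gamma> k u)
      + h e u * iter_oint h (Suc e) (Suc m) u s) (at u within {a..b})"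
    (is "(_ has_vector_derivative ?D) _")
    by (intro has_vector_derivative_add has_vector_derivative_sum has_vector_derivative_mult \<beta> \<gamma>)
  have derivative_eq: "?D = h (e + Suc m) u * oint (\<lambda>r. h e r * iter_oint h (Suc e) m r u) s u"
  proof -
    have "(\<Sum>k\<le>Suc m. iter_oint h (Suc e) k u s * iter_oint h (Suc e + k) (Suc m - k) s u)
        = (\<Sum>k\<le>m. iter_oint h (Suc e) k u s * \<beta> k u) + iter_oint h (Suc e) (Suc m) u s"
      unfolding sum.atMost_Suc \<beta>_def by (auto simp del: iter_oint.simps(2) simp: Suc_diff_le intro!: sum.cong)
    then have "(\<Sum>k\<le>m. \<beta> k u * (h e u * iter_oint h (Suc e) k u s)) + h e u * iter_oint h (Suc e) (Suc m) u s
        = h e u * iter_oint h (Suc e) (Suc m) u u"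
      unfolding iter_oint_split[OF u s u, of "Suc e" "Suc m"]
      by (simp only: sum_distrib_left distrib_left mult_ac)
    then have chen: "(\<Sum>k\<le>m. \<beta> k u * (h e u * iter_oint h (Suc e) k u s)) + h e u * iter_oint h (Suc e) (Suc m) u s = 0"
      by (simp only: iter_oint_self) simp
    have tail: "(\<Sum>k\<le>m. h (e + Suc m) u * iter_oint h (Suc e + k) (m - k) s u * \<gamma> k u)
        = h (e + Suc m) u * oint (\<lambda>r. h e r * iter_oint h (Suc e) m r u) s u"
      unfolding expand[OF u] by (simp only: sum_distrib_left mult.assoc)
    show ?thesis
      unfolding sum.distrib using chen tail by (simp only: add.commute add.left_commute) simp
  qed
  have expand_Suc: "oint (\<lambda>r. h e r * iter_oint h (Suc e) (Suc m) r t) s t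
      = (\<Sum>k\<le>m. \<beta> k t * \<gamma> k t) + \<gamma> (Suc m) t" if "t \<in> {a..b}" for t
    unfolding expand[OF that] sum.atMost_Suc \<beta>_def
    by (auto simp del: iter_oint.simps(2) simp: Suc_diff_le intro!: sum.cong)
  show ?thesis
    using derivative[unfolded derivative_eq]
    by (rule has_vector_derivative_transform[OF u, rotated]) (erule expand_Suc)
qed

lemma iter_oint_Suc_head:
  assumes s: "s \<in> {a..b}"
  shows "t \<in> {a..b} \<Longrightarrow> iter_oint h e (Suc n) s t = oint (\<lambda>r. h e r * iter_oint h (Suc e) n r t) s t"
proof (induction n arbitrary: t)
  case (Suc m)
  show ?case
  proof (rule eq_if_same_vector_derivative_on_interval[OF _ _ s Suc.prems])
    fix u assume u: "u \<in> {a..b}"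
    show "((\<lambda>t. iter_oint h e (Suc (Suc m)) s t) has_vector_derivative
        h (e + Suc m) u * iter_oint h e (Suc m) s u) (at u within {a..b})"
      using has_vector_derivative_iter_oint[OF s u] .
    show "((\<lambda>t. oint (\<lambda>r. h e r * iter_oint h (Suc e) (Suc m) r t) s t) has_vector_derivative
        h (e + Suc m) u * iter_oint h e (Suc m) s u) (at u within {a..b})"
      using has_vector_derivative_oint_head[OF s u] by (simp only: Suc.IH[OF u])
  qed simp
qed simp

lemma iter_oint_swap:
  assumes periodic: "\<And>k. h (Suc (Suc k)) = h k"
  shows "s \<in> {a..b} \<Longrightarrow> t \<in> {a..b} \<Longrightarrow> iter_oint h e n t s = (-1) ^ n * iter_oint h (e + n + 1) n s t"
proof (induction n arbitrary: e s t)
  case (Suc n)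
  note s = Suc.prems(1) and t = Suc.prems(2)
  let ?g = "\<lambda>r. h e r * iter_oint h (e + n + 2) n s r"
  have "iter_oint h e (Suc n) t s = oint (\<lambda>r. h e r * iter_oint h (Suc e) n r s) t s"
    by (rule iter_oint_Suc_head[OF t s])
  also have "\<dots> = oint (\<lambda>r. (-1) ^ n * ?g r) t s"
    using t s by (intro oint_cong) (auto simp: Suc.IH[OF s])
  also have "\<dots> = (-1) ^ Suc n * oint ?g s t"
    using oint_swap[OF continuous_on_mult[OF continuous_h continuous_on_iter_oint[OF s]] s t]
    by (simp add: oint_mult_right)
  also have "oint ?g s t = iter_oint h (e + Suc n + 1) (Suc n) s t"
  proof -
    have "(e + Suc n + 1 + n) mod 2 = e mod 2"
      by presburger
    then have "h (e + Suc n + 1 + n) = h e"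
      by (metis periodic_2_eq_mod_2 periodic)
    then show ?thesis
      by simp
  qed
  finally show ?case .
qed simp

end

definition phi_kernel :: "(real \<Rightarrow> complex) \<Rightarrow> nat \<Rightarrow> real \<Rightarrow> complex" where
  "phi_kernel Phi k = (if odd k then Phi else (\<lambda>\<xi>. 1 / Phi \<xi>))"

lemma Xpow_eq_iter_oint: "Xpow Phi n s t = fact n * iter_oint (phi_kernel Phi) 0 n s t"
proof (induction n arbitrary: t)
  case (Suc n)
  have "(if even (Suc n) then Phi \<xi> else 1 / Phi \<xi>) = phi_kernel Phi n \<xi>" for \<xi>
    by (simp add: phi_kernel_def)
  then have "Xpow Phi (Suc n) s t
      = of_nat (Suc n) * oint (\<lambda>\<xi>. fact n * (phi_kernel Phi n \<xi> * iter_oint (phi_kernel Phi) 0 n s \<xi>)) s t"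
    by (simp add: Suc.IH mult_ac)
  then show ?case
    by (simp add: oint_mult_right)
qed simp

lemma Xtilde_eq_iter_oint: "Xtilde Phi n s t = fact n * iter_oint (phi_kernel Phi) 1 n s t"
proof -
  have "phi_kernel (\<lambda>\<xi>. 1 / Phi \<xi>) = (\<lambda>k. phi_kernel Phi (Suc k))"
    by (auto simp: phi_kernel_def)
  then show ?thesis
    by (simp add: Xtilde_def Xpow_eq_iter_oint iter_oint_Suc_kernels)
qed

theorem theorem2:
  fixes Phi :: "real \<Rightarrow> complex" and a b x0 x :: real and n :: nat
  assumes "continuous_on {a..b} Phi"
    and "\<forall>t\<in>{a..b}. Phi t \<noteq> 0"
    and "x0 \<in> {a..b}" and "x \<in> {a..b}"
  shows "(even n \<longrightarrow> Xtilde Phi n x0 x = Xpow Phi n x x0)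
       \<and> (odd n \<longrightarrow> Xtilde Phi n x0 x = - Xtilde Phi n x x0
                    \<and> Xpow Phi n x0 x = - Xpow Phi n x x0)"
proof -
  have continuous: "continuous_on {a..b} (phi_kernel Phi k)" for k
    using assms(1,2) by (auto simp: phi_kernel_def intro!: continuous_intros)
  have periodic: "phi_kernel Phi (Suc (Suc k)) = phi_kernel Phi k" for k
    by (simp add: phi_kernel_def)
  have swap: "iter_oint (phi_kernel Phi) e n x x0
      = (-1) ^ n * iter_oint (phi_kernel Phi) ((e + n + 1) mod 2) n x0 x" for e
    using iter_oint_swap[of a b "phi_kernel Phi", OF continuous periodic assms(3,4)]
      iter_oint_offset_mod_2[of "phi_kernel Phi", OF periodic]
    by metis
  show ?thesis
    using swap[of 0] swap[of 1]
    by (auto simp: Xpow_eq_iter_oint Xtilde_eq_iter_oint elim!: oddE evenE)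
qed

end
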